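(* Let $k$ be a positive integer and $2\le l\le k+4$. Let $N^l_k$ be the lattice ${\mathbb{Z}}^{l+1}$ with basis $\ell_0,\dots,\ell_l$ and scalar product $(\ell_0,\ell_0)=k$, $(\ell_i,\ell_i)=-1$ for $1\le i\le l$, $(\ell_i,\ell_j)=0$ for $i\ne j$, and let $\omega=-\frac{k+2}{k}\ell_0+\ell_1+\dots+\ell_l\in N^l_k\otimes{\mathbb{Q}}$. Let $R^l_k$ be the set of $\ell\in N^l_k$ with $(\ell,\ell)=-2$ and $(\ell,\omega)=0$. Then $R^l_k\subset\omega^\perp$ is a root system. If $l\ge k+2$, it is a root system in the vector space $\omega^\perp\otimes_{\mathbb{Z}}{\mathbb{R}}\subset N^l_k\otimes_{\mathbb{Z}}{\mathbb{R}}$. If $2\le l<k+2$, $R^l_k$ spans a hyperplane in $\omega^\perp\otimes_{\mathbb{Z}}{\mathbb{R}}$.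
   Context: $\omega^\perp$ denotes the sublattice of $N^l_k$ of elements orthogonal to $\omega$. A root system in a Euclidean space $V$ is a finite spanning set $R$ such that the only multiples of $x\in R$ in $R$ are $\pm x$, $R$ is closed under the reflections in its elements, and $2(x,m)/(x,x)\in{\mathbb{Z}}$ for all $x,m\in R$ (here with respect to the negative of the scalar product, which is positive definite on $\omega^\perp$). *)

theory Defs
  imports "HOL-Analysis.Analysis"
begin

text \<open>The lattice N^l_k is modelled inside the real vector space
  real \<times> (real^'n), where the first component is the coefficient of ell_0 and
  the index type 'n (with CARD('n) = l) indexes ell_1, ..., ell_l.\<close>

definition lat_form :: "nat \<Rightarrow> real \<times> (real^'n) \<Rightarrow> real \<times> (real^'n) \<Rightarrow> real" where
  "lat_form k x y = real k * fst x * fst y - (\<Sum>i\<in>UNIV. snd x $ i * snd y $ i)"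

definition lattice_pts :: "(real \<times> (real^'n)) set" where
  "lattice_pts = {x. fst x \<in> \<int> \<and> (\<forall>i. snd x $ i \<in> \<int>)}"

definition omega :: "nat \<Rightarrow> real \<times> (real^'n)" where
  "omega k = (- (real k + 2) / real k, (\<chi> i. 1))"

definition omega_perp :: "nat \<Rightarrow> (real \<times> (real^'n)) set" where
  "omega_perp k = {v. lat_form k v (omega k) = 0}"

definition roots :: "nat \<Rightarrow> (real \<times> (real^'n)) set" where
  "roots k = {x \<in> lattice_pts. lat_form k x x = -2 \<and> lat_form k x (omega k) = 0}"

definition root_system_in ::
  "('v::real_vector \<Rightarrow> 'v \<Rightarrow> real) \<Rightarrow> 'v set \<Rightarrow> 'v set \<Rightarrow> bool" where
  "root_system_in ip V R \<longleftrightarrow>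
     subspace V \<and> (\<forall>v\<in>V. v \<noteq> 0 \<longrightarrow> ip v v > 0) \<and>
     finite R \<and> R \<subseteq> V \<and> span R = V \<and> 0 \<notin> R \<and>
     (\<forall>x\<in>R. \<forall>c::real. c *\<^sub>R x \<in> R \<longrightarrow> c = 1 \<or> c = -1) \<and>
     (\<forall>x\<in>R. \<forall>m\<in>R. m - (2 * ip x m / ip x x) *\<^sub>R x \<in> R) \<and>
     (\<forall>x\<in>R. \<forall>m\<in>R. 2 * ip x m / ip x x \<in> \<int>)"

end

(* Write v = a l_0 + b_1 l_1 + ... + b_l l_l.  On omega-perp the b_i sum to -(k+2) a, so by
   Cauchy-Schwarz  l * (-(v,v)) >= ((k+2)^2 - l k) a^2,  and the integer coefficient is positive
   whenever l k < (k+2)^2, in particular for l <= k+4.  Hence -(.,.) is positive definite on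
   omega-perp and the roots are integer points with bounded coordinates.  For a root x the
   reflection is m + (x,m) x, which preserves integrality, the norm and orthogonality to omega.
   The roots l_i - l_j span the hyperplane a = 0 of omega-perp.  For l >= k+2 the vector
   l_0 - (sum of k+2 of the l_i) is a root with a = 1, so the roots span omega-perp; for l < k+2
   the inequality forces a = 0 on every root. *)

theory Submission
  imports Defs
begin

lemma Ints_abs_le_power2:
  assumes "(x::real) \<in> \<int>"
  shows "\<bar>x\<bar> \<le> x\<^sup>2"
proof (cases "x = 0")
  case False
  then have "1 \<le> \<bar>x\<bar>"
    using Ints_nonzero_abs_ge1 assms by blast
  then have "\<bar>x\<bar> * 1 \<le> \<bar>x\<bar> * \<bar>x\<bar>"
    by (intro mult_left_mono) auto
  then show ?thesis
    by (simp add: power2_eq_square)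
qed simp

lemma lat_form_commute: "lat_form k x y = lat_form k y x"
  unfolding lat_form_def by (simp add: mult.commute mult.left_commute)

lemma lat_form_zero_left [simp]: "lat_form k 0 z = 0"
  unfolding lat_form_def by simp

lemma lat_form_add_left: "lat_form k (x + y) z = lat_form k x z + lat_form k y z"
  unfolding lat_form_def by (simp add: algebra_simps sum.distrib)

lemma lat_form_scaleR_left: "lat_form k (c *\<^sub>R x) z = c * lat_form k x z"
  unfolding lat_form_def by (simp add: algebra_simps sum_distrib_left)

lemma lat_form_add_right: "lat_form k z (x + y) = lat_form k z x + lat_form k z y"
  by (simp add: lat_form_commute[of k z] lat_form_add_left)

lemma lat_form_scaleR_right: "lat_form k z (c *\<^sub>R x) = c * lat_form k z x"
  by (simp add: lat_form_commute[of k z] lat_form_scaleR_left)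

lemma lat_form_self: "lat_form k x x = real k * (fst x)\<^sup>2 - (\<Sum>i\<in>UNIV. (snd x $ i)\<^sup>2)"
  unfolding lat_form_def by (simp add: power2_eq_square)

lemma lat_form_omega:
  "0 < k \<Longrightarrow> lat_form k x (omega k) = - (real k + 2) * fst x - (\<Sum>i\<in>UNIV. snd x $ i)"
  unfolding lat_form_def omega_def by simp

lemma lat_form_Ints: "x \<in> lattice_pts \<Longrightarrow> y \<in> lattice_pts \<Longrightarrow> lat_form k x y \<in> \<int>"
  unfolding lat_form_def lattice_pts_def by (intro Ints_diff Ints_mult Ints_sum) auto

lemma lattice_pts_add_scaleR:
  "x \<in> lattice_pts \<Longrightarrow> y \<in> lattice_pts \<Longrightarrow> c \<in> \<int> \<Longrightarrow> x + c *\<^sub>R y \<in> lattice_pts"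
  unfolding lattice_pts_def by (auto intro!: Ints_add Ints_mult)

lemma subspace_omega_perp: "subspace (omega_perp k)"
  unfolding subspace_def omega_perp_def by (simp add: lat_form_add_left lat_form_scaleR_left)

lemma roots_subset_omega_perp: "roots k \<subseteq> omega_perp k"
  unfolding roots_def omega_perp_def by auto

lemma span_roots_subset_omega_perp: "span (roots k) \<subseteq> omega_perp k"
  by (rule span_minimal[OF roots_subset_omega_perp subspace_omega_perp])

lemma omega_perp_fst_power2_le:
  fixes v :: "real \<times> (real^'n)"
  assumes "0 < k" "v \<in> omega_perp k"
  shows "((real k + 2)\<^sup>2 - real CARD('n) * real k) * (fst v)\<^sup>2
           \<le> real CARD('n) * - lat_form k v v"
proof -
  let ?l = "real CARD('n)" and ?a = "fst v"
  have sum: "(\<Sum>i\<in>UNIV. snd v $ i) = - (real k + 2) * ?a"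
    using assms lat_form_omega[of k v] unfolding omega_perp_def by simp
  have "(real k + 2)\<^sup>2 * ?a\<^sup>2 = (\<Sum>i\<in>UNIV. snd v $ i)\<^sup>2"
    by (simp only: sum) (simp add: power2_eq_square algebra_simps)
  also have "\<dots> \<le> (\<Sum>i\<in>UNIV. (snd v $ i)\<^sup>2) * ?l"
    by (rule sum_squared_le_sum_of_squares)
  finally have "(real k + 2)\<^sup>2 * ?a\<^sup>2 \<le> (\<Sum>i\<in>UNIV. (snd v $ i)\<^sup>2) * ?l" .
  moreover have "?l * - lat_form k v v = (\<Sum>i\<in>UNIV. (snd v $ i)\<^sup>2) * ?l - ?l * real k * ?a\<^sup>2"
    unfolding lat_form_self by (simp add: algebra_simps)
  ultimately show ?thesis by (simp add: algebra_simps)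
qed

lemma card_mult_less_of_le:
  "CARD('n::finite) \<le> k + 4 \<Longrightarrow> CARD('n) * k < (k + 2)\<^sup>2"
  by (rule le_less_trans[OF mult_right_mono[of _ "k + 4"]]) (simp_all add: power2_eq_square algebra_simps)

lemma card_mult_less_imp_one_le:
  "CARD('n) * k < (k + 2)\<^sup>2 \<Longrightarrow> 1 \<le> (real k + 2)\<^sup>2 - real CARD('n::finite) * real k"
proof -
  assume "CARD('n) * k < (k + 2)\<^sup>2"
  then have "real (CARD('n) * k) + 1 \<le> real ((k + 2)\<^sup>2)"
    by (metis Suc_leI of_nat_Suc of_nat_le_iff add.commute)
  then show ?thesis by (simp add: add.commute)
qed

lemma lat_form_neg_omega_perp:
  fixes v :: "real \<times> (real^'n)"
  assumes "0 < k" "CARD('n) * k < (k + 2)\<^sup>2" "v \<in> omega_perp k" "v \<noteq> 0"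
  shows "lat_form k v v < 0"
proof (cases "fst v = 0")
  case True
  then obtain i where "snd v $ i \<noteq> 0"
    using assms(4) by (auto simp: prod_eq_iff vec_eq_iff)
  then have "0 < (\<Sum>i\<in>UNIV. (snd v $ i)\<^sup>2)"
    by (intro sum_pos2[of _ i]) auto
  with True show ?thesis by (simp add: lat_form_self)
next
  case False
  have "(fst v)\<^sup>2 \<le> ((real k + 2)\<^sup>2 - real CARD('n) * real k) * (fst v)\<^sup>2"
    using card_mult_less_imp_one_le[OF assms(2)] by (simp add: mult_le_cancel_right1)
  also have "\<dots> \<le> real CARD('n) * - lat_form k v v"
    by (rule omega_perp_fst_power2_le[OF assms(1,3)])
  finally have "0 < real CARD('n) * - lat_form k v v"
    using False by (smt (verit) zero_less_power2)
  then show ?thesis by (simp add: zero_less_mult_iff mult_less_0_iff)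
qed

lemma roots_fst_power2_le:
  fixes x :: "real \<times> (real^'n)"
  assumes "0 < k" "CARD('n) * k < (k + 2)\<^sup>2" "x \<in> roots k"
  shows "(fst x)\<^sup>2 \<le> 2 * real CARD('n)"
proof -
  have "x \<in> omega_perp k" and "lat_form k x x = -2"
    using assms(3) roots_subset_omega_perp unfolding roots_def by auto
  then have "((real k + 2)\<^sup>2 - real CARD('n) * real k) * (fst x)\<^sup>2 \<le> 2 * real CARD('n)"
    using omega_perp_fst_power2_le[OF assms(1), of x] by simp
  moreover have "(fst x)\<^sup>2 \<le> ((real k + 2)\<^sup>2 - real CARD('n) * real k) * (fst x)\<^sup>2"
    using card_mult_less_imp_one_le[OF assms(2)] by (simp add: mult_le_cancel_right1)
  ultimately show ?thesis by linarith
qed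

lemma finite_lattice_pts_box:
  fixes N :: nat
  shows "finite {x :: real \<times> (real^'n). x \<in> lattice_pts \<and> \<bar>fst x\<bar> \<le> real N \<and> (\<forall>i. \<bar>snd x $ i\<bar> \<le> real N)}"
    (is "finite ?B")
proof -
  define embed :: "int \<times> ('n::finite \<Rightarrow> int) \<Rightarrow> real \<times> (real^'n)"
    where "embed p = (of_int (fst p), \<chi> i. of_int (snd p i))" for p
  let ?box = "{-int N..int N} \<times> PiE (UNIV :: 'n set) (\<lambda>_. {-int N..int N})"
  have "?B \<subseteq> embed ` ?box"
  proof
    fix x assume x: "x \<in> ?B"
    then have "fst x \<in> \<int>" "\<forall>i. snd x $ i \<in> \<int>"
      by (auto simp: lattice_pts_def)
    then have "x = embed (\<lfloor>fst x\<rfloor>, \<lambda>i. \<lfloor>snd x $ i\<rfloor>)"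
      by (simp add: embed_def prod_eq_iff vec_eq_iff)
    moreover have "\<lfloor>y\<rfloor> \<in> {-int N..int N}" if "\<bar>y\<bar> \<le> real N" for y :: real
      using that by (simp add: abs_le_iff floor_le_iff le_floor_iff)
    then have "(\<lfloor>fst x\<rfloor>, \<lambda>i. \<lfloor>snd x $ i\<rfloor>) \<in> ?box"
      using x by auto
    ultimately show "x \<in> embed ` ?box" by blast
  qed
  moreover have "finite ?box"
    by (intro finite_cartesian_product finite_PiE) auto
  ultimately show ?thesis by (meson finite_imageI finite_subset)
qed

lemma finite_roots:
  assumes "0 < k" "CARD('n::finite) * k < (k + 2)\<^sup>2"
  shows "finite (roots k :: (real \<times> (real^'n)) set)"
proof -
  let ?N = "2 * k * CARD('n) + 2"
  have "roots k \<subseteq> {x :: real \<times> (real^'n). x \<in> lattice_pts \<and>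
          \<bar>fst x\<bar> \<le> real ?N \<and> (\<forall>i. \<bar>snd x $ i\<bar> \<le> real ?N)}"
  proof (intro subsetI CollectI conjI allI)
    fix x :: "real \<times> (real^'n)" and i
    assume x: "x \<in> roots k"
    then have lat: "x \<in> lattice_pts" and "lat_form k x x = -2"
      unfolding roots_def by auto
    then have squares: "(\<Sum>j\<in>UNIV. (snd x $ j)\<^sup>2) = real k * (fst x)\<^sup>2 + 2"
      by (simp add: lat_form_self)
    have a: "(fst x)\<^sup>2 \<le> 2 * real CARD('n)"
      by (rule roots_fst_power2_le[OF assms x])
    have "real k * (fst x)\<^sup>2 \<le> real k * (2 * real CARD('n))"
      using a by (rule mult_left_mono) simp
    then have ka: "real k * (fst x)\<^sup>2 \<le> 2 * real k * real CARD('n)" by simp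
    have "\<bar>fst x\<bar> \<le> (fst x)\<^sup>2"
      using lat by (intro Ints_abs_le_power2) (simp add: lattice_pts_def)
    moreover have "2 * real CARD('n) \<le> 2 * real k * real CARD('n)"
      using assms(1) by (intro mult_right_mono) auto
    ultimately have "\<bar>fst x\<bar> \<le> 2 * real k * real CARD('n) + 2" using a by linarith
    then show "\<bar>fst x\<bar> \<le> real ?N" by simp
    have "\<bar>snd x $ i\<bar> \<le> (snd x $ i)\<^sup>2"
      using lat by (intro Ints_abs_le_power2) (simp add: lattice_pts_def)
    also have "\<dots> \<le> (\<Sum>j\<in>UNIV. (snd x $ j)\<^sup>2)"
      by (rule member_le_sum) auto
    finally show "\<bar>snd x $ i\<bar> \<le> real ?N" using squares ka by simp
  qed (auto simp: roots_def)
  then show ?thesis by (rule finite_subset) (rule finite_lattice_pts_box)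
qed

lemma lat_form_reflection:
  assumes "lat_form k x x = -2"
  shows "lat_form k (m + lat_form k x m *\<^sub>R x) (m + lat_form k x m *\<^sub>R x) = lat_form k m m"
  by (simp add: lat_form_add_left lat_form_add_right lat_form_scaleR_left lat_form_scaleR_right
      lat_form_commute[of k m x] assms algebra_simps)

lemma reflection_in_roots:
  assumes "x \<in> roots k" "m \<in> roots k"
  shows "m + lat_form k x m *\<^sub>R x \<in> roots k"
proof -
  have "lat_form k (m + lat_form k x m *\<^sub>R x) (m + lat_form k x m *\<^sub>R x) = -2"
    using assms by (simp add: roots_def lat_form_reflection)
  moreover have "lat_form k (m + lat_form k x m *\<^sub>R x) (omega k) = 0"
    using assms by (simp add: roots_def lat_form_add_left lat_form_scaleR_left)
  ultimately show ?thesis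
    using assms by (auto simp: roots_def intro!: lattice_pts_add_scaleR lat_form_Ints)
qed

lemma scaleR_in_roots:
  assumes "x \<in> roots k" "c *\<^sub>R x \<in> roots k"
  shows "c = 1 \<or> c = -1"
proof -
  have "lat_form k (c *\<^sub>R x) (c *\<^sub>R x) = c\<^sup>2 * lat_form k x x"
    by (simp add: lat_form_scaleR_left lat_form_scaleR_right power2_eq_square)
  with assms have "c\<^sup>2 = 1" by (simp add: roots_def)
  then show ?thesis by (simp add: power2_eq_1_iff)
qed

lemma root_system_roots:
  assumes "0 < k" "CARD('n::finite) * k < (k + 2)\<^sup>2"
  shows "root_system_in (\<lambda>x y. - lat_form k x y) (span (roots k :: (real \<times> (real^'n)) set)) (roots k)"
proof -
  have cartan: "2 * - lat_form k x m / - lat_form k x x = - lat_form k x m"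
    if "x \<in> roots k" for x m :: "real \<times> (real^'n)"
    using that by (simp add: roots_def)
  show ?thesis
    unfolding root_system_in_def
  proof (intro conjI ballI allI impI)
    fix v :: "real \<times> (real^'n)"
    assume "v \<in> span (roots k)" and "v \<noteq> 0"
    then show "0 < - lat_form k v v"
      using lat_form_neg_omega_perp[OF assms] span_roots_subset_omega_perp by fastforce
  next
    fix x m :: "real \<times> (real^'n)"
    assume "x \<in> roots k" and "m \<in> roots k"
    then show "m - (2 * - lat_form k x m / - lat_form k x x) *\<^sub>R x \<in> roots k"
      and "2 * - lat_form k x m / - lat_form k x x \<in> \<int>"
      unfolding cartan[OF \<open>x \<in> roots k\<close>]
      by (simp add: reflection_in_roots, simp add: roots_def lat_form_Ints)
  qed (auto simp: finite_roots[OF assms] span_superset scaleR_in_roots, simp add: roots_def)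
qed

lemma axis_diff_in_roots:
  assumes "0 < k" "i \<noteq> j"
  shows "(0, axis i 1 - axis j 1) \<in> (roots k :: (real \<times> (real^'n)) set)"
proof -
  have "(\<Sum>t\<in>UNIV. ((axis i 1 - axis j 1 :: real^'n) $ t)\<^sup>2)
      = (\<Sum>t\<in>UNIV. (if t = i then 1 else 0) + (if t = j then 1 else (0::real)))"
    using assms(2) by (intro sum.cong) (auto simp: axis_def)
  moreover have "(\<Sum>t\<in>UNIV. (axis i 1 - axis j 1 :: real^'n) $ t) = 0"
    by (simp add: axis_def sum_subtractf)
  ultimately show ?thesis
    using assms(1) by (simp add: roots_def lattice_pts_def lat_form_self lat_form_omega
        sum.distrib axis_def)
qed

lemma zero_sum_in_span_roots:
  fixes z :: "real \<times> (real^'n)"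
  assumes "0 < k" "fst z = 0" "(\<Sum>i\<in>UNIV. snd z $ i) = 0"
  shows "z \<in> span (roots k)"
proof -
  obtain j :: 'n where True by blast
  have "(\<Sum>i\<in>UNIV. snd z $ i *\<^sub>R (0, axis i 1 - axis j 1))
      = (0, (\<Sum>i\<in>UNIV. snd z $ i *\<^sub>R axis i 1) - (\<Sum>i\<in>UNIV. snd z $ i) *\<^sub>R axis j 1)"
    by (simp add: prod_eq_iff fst_sum snd_sum scaleR_diff_right sum_subtractf scaleR_sum_left)
  also have "\<dots> = z"
    using assms(2,3) basis_expansion[of "snd z"] by (simp add: prod_eq_iff scalar_mult_eq_scaleR)
  finally have z: "z = (\<Sum>i\<in>UNIV. snd z $ i *\<^sub>R (0, axis i 1 - axis j 1))" ..
  have "(0, axis i 1 - axis j 1) \<in> span (roots k)" for i :: 'n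
  proof (cases "i = j")
    case True
    then show ?thesis using span_zero[of "roots k"] by (simp add: zero_prod_def)
  qed (simp add: axis_diff_in_roots[OF assms(1)] span_base)
  then show ?thesis
    by (subst z) (intro span_sum span_scale)
qed

lemma omega_perp_subset_span_insert:
  fixes u :: "real \<times> (real^'n)"
  assumes "0 < k" "u \<in> omega_perp k" "fst u = 1"
  shows "omega_perp k \<subseteq> span (insert u (roots k))"
proof
  fix v :: "real \<times> (real^'n)"
  assume v: "v \<in> omega_perp k"
  have "v - fst v *\<^sub>R u \<in> omega_perp k"
    using subspace_omega_perp v assms(2) by (intro subspace_diff subspace_scale)
  then have "v - fst v *\<^sub>R u \<in> span (roots k)"
    using assms by (intro zero_sum_in_span_roots) (simp_all add: omega_perp_def lat_form_omega)
  then have "v - fst v *\<^sub>R u \<in> span (insert u (roots k))"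
    using span_mono[of "roots k" "insert u (roots k)"] by blast
  moreover have "fst v *\<^sub>R u \<in> span (insert u (roots k))"
    by (simp add: span_base span_scale)
  ultimately have "(v - fst v *\<^sub>R u) + fst v *\<^sub>R u \<in> span (insert u (roots k))"
    by (rule span_add)
  then show "v \<in> span (insert u (roots k))" by simp
qed

lemma exists_root_fst_eq_1:
  assumes "0 < k" "k + 2 \<le> CARD('n::finite)"
  obtains u :: "real \<times> (real^'n)" where "u \<in> roots k" and "fst u = 1"
proof -
  obtain S :: "'n set" where S: "card S = k + 2"
    using obtain_subset_with_card_n[OF assms(2)[unfolded card_UNIV_def]] by metis
  define u :: "real \<times> (real^'n)" where "u = (1, \<chi> i. if i \<in> S then -1 else 0)"
  have "(\<Sum>i\<in>UNIV. ((\<chi> i. if i \<in> S then -1 else 0 :: real^'n) $ i)\<^sup>2) = real (k + 2)"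
    using S by (simp add: if_distrib[of power2] sum.If_cases)
  moreover have "(\<Sum>i\<in>UNIV. (\<chi> i. if i \<in> S then -1 else 0 :: real^'n) $ i) = - real (k + 2)"
    using S by (simp add: sum.If_cases)
  ultimately have "u \<in> roots k"
    using assms(1) by (simp add: u_def roots_def lattice_pts_def lat_form_self lat_form_omega)
  then show ?thesis by (rule that) (simp add: u_def)
qed

lemma span_roots_eq_omega_perp:
  assumes "0 < k" "k + 2 \<le> CARD('n::finite)"
  shows "span (roots k :: (real \<times> (real^'n)) set) = omega_perp k"
proof
  obtain u :: "real \<times> (real^'n)" where u: "u \<in> roots k" "fst u = 1"
    using exists_root_fst_eq_1[OF assms] .
  then have "omega_perp k \<subseteq> span (insert u (roots k))"
    using roots_subset_omega_perp by (intro omega_perp_subset_span_insert[OF assms(1)]) auto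
  with u show "omega_perp k \<subseteq> span (roots k :: (real \<times> (real^'n)) set)"
    by (simp add: insert_absorb)
qed (rule span_roots_subset_omega_perp)

lemma roots_fst_eq_0:
  fixes x :: "real \<times> (real^'n)"
  assumes "0 < k" "CARD('n) < k + 2" "x \<in> roots k"
  shows "fst x = 0"
proof (rule ccontr)
  assume "fst x \<noteq> 0"
  moreover have "fst x \<in> \<int>"
    using assms(3) by (simp add: roots_def lattice_pts_def)
  ultimately have "1 \<le> (fst x)\<^sup>2"
    by (metis Ints_abs_le_power2 Ints_nonzero_abs_ge1 order.trans)
  have card: "real CARD('n) \<le> real k + 1"
    using assms(2) by simp
  then have "real CARD('n) * real k \<le> (real k + 1) * real k"
    by (rule mult_right_mono) simp
  then have "3 * real k + 4 \<le> (real k + 2)\<^sup>2 - real CARD('n) * real k"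
    by (simp add: power2_eq_square algebra_simps)
  also have "\<dots> \<le> ((real k + 2)\<^sup>2 - real CARD('n) * real k) * (fst x)\<^sup>2"
    using \<open>1 \<le> (fst x)\<^sup>2\<close> calculation by (simp add: mult_le_cancel_left1)
  also have "\<dots> \<le> real CARD('n) * - lat_form k x x"
    using assms(3) roots_subset_omega_perp by (intro omega_perp_fst_power2_le[OF assms(1)]) auto
  also have "\<dots> = 2 * real CARD('n)"
    using assms(3) by (simp add: roots_def)
  finally show False
    using card by linarith
qed

lemma Suc_dim_span_roots:
  assumes "0 < k" "CARD('n::finite) < k + 2"
  shows "dim (span (roots k :: (real \<times> (real^'n)) set)) + 1 = dim (omega_perp k :: (real \<times> (real^'n)) set)"
proof -
  obtain j :: 'n where True by blast
  define u :: "real \<times> (real^'n)" where "u = (1, axis j (- (real k + 2)))"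
  have u: "u \<in> omega_perp k"
    using assms(1) by (simp add: u_def omega_perp_def lat_form_omega axis_def)
  have "span (roots k) \<subseteq> {v :: real \<times> (real^'n). fst v = 0}"
    using roots_fst_eq_0[OF assms] by (intro span_minimal) (auto simp: subspace_def)
  then have "u \<notin> span (roots k)"
    by (auto simp: u_def)
  have "span (insert u (roots k)) = omega_perp k"
  proof
    show "span (insert u (roots k)) \<subseteq> omega_perp k"
      using u roots_subset_omega_perp by (intro span_minimal subspace_omega_perp) auto
  qed (rule omega_perp_subset_span_insert[OF assms(1) u], simp add: u_def)
  then have "dim (omega_perp k :: (real \<times> (real^'n)) set) = dim (insert u (roots k))"
    by (metis dim_span)
  also have "\<dots> = dim (roots k :: (real \<times> (real^'n)) set) + 1"
    using \<open>u \<notin> span (roots k)\<close> by (simp add: dim_insert)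
  finally show ?thesis by (simp add: dim_span)
qed

theorem proposition5p4:
  fixes k :: nat
  assumes "k \<ge> 1" and "2 \<le> CARD('n::finite)" and "CARD('n) \<le> k + 4"
  shows "root_system_in (\<lambda>x y. - lat_form k x y) (span (roots k :: (real \<times> (real^'n)) set)) (roots k)
       \<and> roots k \<subseteq> omega_perp k
       \<and> (CARD('n) \<ge> k + 2 \<longrightarrow> span (roots k :: (real \<times> (real^'n)) set) = omega_perp k)
       \<and> (CARD('n) < k + 2 \<longrightarrow>
            dim (span (roots k :: (real \<times> (real^'n)) set)) + 1 = dim (omega_perp k :: (real \<times> (real^'n)) set))"
proof (intro conjI impI)
  have k: "0 < k" using assms(1) by simp
  show "root_system_in (\<lambda>x y. - lat_form k x y) (span (roots k)) (roots k :: (real \<times> (real^'n)) set)"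
    using root_system_roots[OF k card_mult_less_of_le[OF assms(3)]] .
  show "roots k \<subseteq> omega_perp k"
    by (rule roots_subset_omega_perp)
  show "span (roots k) = (omega_perp k :: (real \<times> (real^'n)) set)" if "k + 2 \<le> CARD('n)"
    using span_roots_eq_omega_perp[OF k that] .
  show "dim (span (roots k :: (real \<times> (real^'n)) set)) + 1 = dim (omega_perp k :: (real \<times> (real^'n)) set)"
    if "CARD('n) < k + 2"
    using Suc_dim_span_roots[OF k that] .
qed

end
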